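(* (a) For every word $r\in\{0,1\}^*$, $V([r0]_F)\geq V([r]_F)$. (b) For all integers $k\geq 0$ and all words $r'\in\{0,1\}^*$, $V([r'10^{2k+1}]_F)=V([r'10^{2k}]_F)$.
   Context: Fibonacci numbers: $F_0=0$, $F_1=1$, $F_{m+2}=F_{m+1}+F_m$. For a word $k_m\cdots k_0$ of nonnegative integer digits (in particular a word over $\{0,1\}$), $[k_m\cdots k_0]_F=\sum_{i=0}^m k_iF_{i+2}$; $0^j$ denotes $j$ copies of the digit $0$ and juxtaposition is concatenation. Standard Fibonacci words: $f_{-1}=b$, $f_0=a$, $f_{m+1}=f_mf_{m-1}$. The Fibonacci word ${\bf f}=\lim f_m$, with prefix of length $j$ denoted ${\bf f}(0..j]$. $V(N)$ is the number of factorizations of ${\bf f}(0..N]$ as $f_m^{k_m}f_{m-1}^{k_{m-1}}\cdots f_0^{k_0}$ with all $k_i\geq 0$ (i.e. into standard words $f_i$, $i\ge 0$, in non-strictly decreasing order of index), counted up to leading zero exponents; $V(0)=1$. *)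

theory Defs
  imports Main "HOL-Number_Theory.Fib"
begin

datatype letter = La | Lb

text \<open>sw n is the standard word f_{n-1}: sw 0 = f_{-1} = b, sw 1 = f_0 = a,
  f_{m+1} = f_m f_{m-1}.\<close>
fun sw :: "nat \<Rightarrow> letter list" where
  "sw 0 = [Lb]"
| "sw (Suc 0) = [La]"
| "sw (Suc (Suc n)) = sw (Suc n) @ sw n"

definition fw :: "nat \<Rightarrow> letter list" where
  "fw m = sw (Suc m)"

text \<open>The infinite Fibonacci word as the limit of f_m: its i-th letter (0-based)
  is the i-th letter of f_i (each f_m is a prefix of f_{m+1} and |f_i| > i).\<close>
definition fibword :: "nat \<Rightarrow> letter" where
  "fibword i = fw i ! i"

definition fib_prefix :: "nat \<Rightarrow> letter list" where
  "fib_prefix N = map fibword [0..<N]"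

text \<open>Value [k_m ... k_0]_F = sum k_i F_{i+2}; list written most significant digit first.\<close>
definition fibval :: "nat list \<Rightarrow> nat" where
  "fibval ds = (\<Sum>i<length ds. rev ds ! i * fib (i + 2))"

text \<open>The word f_m^{k_m} ... f_0^{k_0} for exponent list ks with ks ! i = k_i.\<close>
definition fact_word :: "nat list \<Rightarrow> letter list" where
  "fact_word ks = concat (map (\<lambda>i. concat (replicate (ks ! i) (fw i))) (rev [0..<length ks]))"

text \<open>Factorizations counted up to leading zero exponents: exponent lists with
  nonzero top exponent (the empty list for the empty factorization).\<close>
definition V :: "nat \<Rightarrow> nat" where
  "V N = card {ks. (ks = [] \<or> last ks \<noteq> 0) \<and> fact_word ks = fib_prefix N}"

end

theory Submission
  imports Defs "HOL-Library.Sublist"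
begin

(* The Fibonacci morphism phi (a -> ab, b -> a) maps f_m to f_(m+1), so it turns a
   factorization f_m^k_m ... f_0^k_0 of a word w into the factorization of phi(w) with
   exponents k_m ... k_0 0. For a binary word r the prefix of length [r]_F of the Fibonacci
   word is the word f_m^k_m ... f_0^k_0 read off from r itself, so the prefix of length
   [r0]_F is its image under phi, which gives (a).
   If w ends with a, then phi(w) ends with b, so every factorization of phi(w) has k_0 = 0;
   as phi is injective, the map above is then a bijection. Since phi^2(a) = aba, the prefix
   of length [r'10^(2k)]_F = phi^(2k)(... a) ends with a, which gives (b). *)

fun fib_morph_letter :: "letter \<Rightarrow> letter list" where
  "fib_morph_letter La = [La, Lb]"
| "fib_morph_letter Lb = [La]"

definition fib_morph :: "letter list \<Rightarrow> letter list" where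
  "fib_morph w = concat (map fib_morph_letter w)"

lemma fib_morph_Nil [simp]: "fib_morph [] = []"
  by (simp add: fib_morph_def)

lemma fib_morph_Cons [simp]: "fib_morph (x # w) = fib_morph_letter x @ fib_morph w"
  by (simp add: fib_morph_def)

lemma fib_morph_append [simp]: "fib_morph (u @ v) = fib_morph u @ fib_morph v"
  by (simp add: fib_morph_def)

lemma fib_morph_concat: "fib_morph (concat ws) = concat (map fib_morph ws)"
  by (induction ws) auto

lemma fib_morph_eq_Nil_iff [simp]: "fib_morph w = [] \<longleftrightarrow> w = []"
  by (cases w; cases "hd w") auto

lemma last_fib_morph: "w \<noteq> [] \<Longrightarrow> last (fib_morph w) = (if last w = La then Lb else La)"
  by (cases w rule: rev_cases; cases "last w") auto

text \<open>A left inverse of \<open>fib_morph\<close>: in an image, a is followed by b exactly when it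
  comes from a.\<close>
fun fib_unmorph :: "letter list \<Rightarrow> letter list" where
  "fib_unmorph [] = []"
| "fib_unmorph (La # Lb # w) = La # fib_unmorph w"
| "fib_unmorph (La # w) = Lb # fib_unmorph w"
| "fib_unmorph (Lb # w) = Lb # fib_unmorph w"

lemma fib_unmorph_fib_morph: "fib_unmorph (fib_morph w) = w"
proof (induction w)
  case (Cons x w)
  then show ?case
    by (cases x; cases w; cases "hd w") auto
qed simp

lemma inj_fib_morph: "inj fib_morph"
  by (metis injI fib_unmorph_fib_morph)

lemma fib_morph_sw: "fib_morph (sw n) = sw (Suc n)"
  by (induction n rule: sw.induct) auto

lemma fib_morph_fw: "fib_morph (fw n) = fw (Suc n)"
  by (simp add: fw_def fib_morph_sw)

lemma sw_neq_Nil [simp]: "sw n \<noteq> []"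
  by (induction n rule: sw.induct) auto

lemma fw_Suc: "fw (Suc n) = fw n @ sw n"
  by (simp add: fw_def)

lemma length_sw: "length (sw n) = fib (Suc n)"
  by (induction n rule: sw.induct) (auto simp: fib_plus_2 [simplified])

lemma length_fw: "length (fw n) = fib (n + 2)"
  by (simp add: fw_def length_sw)

lemma le_fib_Suc: "n \<le> fib (Suc n)"
proof (induction n rule: fib.induct)
  case (3 n)
  then show ?case
    using fib_neq_0_nat[of "Suc n"] by simp
qed simp_all

lemma length_fw_gt: "n < length (fw n)"
  using le_fib_Suc[of "Suc n"] by (simp add: length_fw)

lemma prefix_fw_mono: "m \<le> n \<Longrightarrow> prefix (fw m) (fw n)"
proof (induction n)
  case (Suc n)
  then show ?case
    by (cases "m = Suc n") (auto simp: fw_Suc)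
qed simp

lemma fibword_eq_nth_fw: "i < length (fw n) \<Longrightarrow> fibword i = fw n ! i"
proof -
  assume i: "i < length (fw n)"
  obtain u where u: "fw (max i n) = fw i @ u"
    using prefix_fw_mono[of i "max i n"] by (auto elim: prefixE)
  obtain v where v: "fw (max i n) = fw n @ v"
    using prefix_fw_mono[of n "max i n"] by (auto elim: prefixE)
  have "fw i ! i = fw (max i n) ! i"
    using u length_fw_gt[of i] by (simp add: nth_append)
  also have "\<dots> = fw n ! i"
    using v i by (simp add: nth_append)
  finally show ?thesis
    by (simp add: fibword_def)
qed

definition is_fib_prefix :: "letter list \<Rightarrow> bool" where
  "is_fib_prefix w \<longleftrightarrow> (\<exists>n. prefix w (fw n))"

lemma fib_prefix_length: "is_fib_prefix w \<Longrightarrow> fib_prefix (length w) = w"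
proof -
  assume "is_fib_prefix w"
  then obtain n v where nv: "fw n = w @ v"
    by (auto simp: is_fib_prefix_def elim: prefixE)
  show ?thesis
  proof (rule nth_equalityI)
    fix i assume "i < length (fib_prefix (length w))"
    then have i: "i < length w"
      by (simp add: fib_prefix_def)
    then have "fibword i = fw n ! i"
      using nv by (intro fibword_eq_nth_fw) simp
    then show "fib_prefix (length w) ! i = w ! i"
      using nv i by (simp add: fib_prefix_def nth_append)
  qed (simp add: fib_prefix_def)
qed

lemma is_fib_prefix_fib_morph_snoc_La:
  assumes "is_fib_prefix w"
  shows "is_fib_prefix (fib_morph w @ [La])"
proof -
  obtain n where "prefix w (fw n)"
    using assms by (auto simp: is_fib_prefix_def)
  moreover have "strict_prefix (fw n) (fw (Suc n))"
    by (simp add: fw_Suc strict_prefix_def)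
  ultimately have "strict_prefix w (fw (Suc n))"
    using prefix_order.le_less_trans by blast
  then obtain c v where "fw (Suc n) = w @ c # v"
    by (auto elim: strict_prefixE')
  then have "fw (Suc (Suc n)) = fib_morph w @ fib_morph_letter c @ fib_morph v"
    by (metis fib_morph_fw fib_morph_append fib_morph_Cons append.assoc)
  then have "prefix (fib_morph w @ [La]) (fw (Suc (Suc n)))"
    by (cases c) (auto simp: prefix_def)
  then show ?thesis
    by (auto simp: is_fib_prefix_def)
qed

lemma fact_word_Nil [simp]: "fact_word [] = []"
  by (simp add: fact_word_def)

lemma fact_word_Cons: "fact_word (e # ks) = fib_morph (fact_word ks) @ replicate e La"
proof -
  have "rev [0..<length (e # ks)] = map Suc (rev [0..<length ks]) @ [0]"
    by (simp add: upt_conv_Cons map_Suc_upt rev_map [symmetric] del: upt_Suc rev_map)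
  then have "fact_word (e # ks)
      = concat (map (\<lambda>i. concat (replicate (ks ! i) (fw (Suc i)))) (rev [0..<length ks]))
        @ concat (replicate e (fw 0))"
    by (simp add: fact_word_def o_def)
  then show ?thesis
    by (simp add: fact_word_def fib_morph_concat fib_morph_fw o_def) (simp add: fw_def)
qed

lemma length_fact_word: "length (fact_word ks) = (\<Sum>i<length ks. ks ! i * fib (i + 2))"
proof -
  have "length (fact_word ks) = sum_list (map (\<lambda>i. ks ! i * fib (i + 2)) (rev [0..<length ks]))"
    by (simp add: fact_word_def length_concat length_fw o_def sum_list_replicate
        del: fib_plus_2 fib.simps)
  also have "\<dots> = (\<Sum>i<length ks. ks ! i * fib (i + 2))"
    by (simp add: rev_map [symmetric] sum_list_rev sum_set_upt_conv_sum_list_nat [symmetric]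
        atLeast0LessThan del: rev_map fib_plus_2 fib.simps)
  finally show ?thesis .
qed

lemma fibval_eq_length_fact_word: "fibval r = length (fact_word (rev r))"
  by (simp add: fibval_def length_fact_word)

lemma is_fib_prefix_fact_word: "set ks \<subseteq> {0, 1} \<Longrightarrow> is_fib_prefix (fact_word ks)"
proof (induction ks)
  case Nil
  show ?case
    by (auto simp: is_fib_prefix_def)
next
  case (Cons e ks)
  then have "is_fib_prefix (fib_morph (fact_word ks) @ [La])"
    by (intro is_fib_prefix_fib_morph_snoc_La) simp
  moreover have "e = 0 \<or> e = 1"
    using Cons.prems by simp
  ultimately show ?case
    unfolding is_fib_prefix_def fact_word_Cons by (auto; meson append_prefixD)
qed

definition factorizations :: "letter list \<Rightarrow> nat list set" where
  "factorizations w = {ks. (ks = [] \<or> last ks \<noteq> 0) \<and> fact_word ks = w}"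

lemma V_fibval:
  assumes "set r \<subseteq> {0, 1}"
  shows "V (fibval r) = card (factorizations (fact_word (rev r)))"
proof -
  have "fib_prefix (fibval r) = fact_word (rev r)"
    using assms by (simp add: fibval_eq_length_fact_word fib_prefix_length is_fib_prefix_fact_word)
  then show ?thesis
    by (simp add: V_def factorizations_def)
qed

lemma nth_mult_fib_le_length_fact_word:
  "i < length ks \<Longrightarrow> ks ! i * fib (i + 2) \<le> length (fact_word ks)"
  unfolding length_fact_word by (rule member_le_sum) auto

lemma finite_factorizations: "finite (factorizations w)"
proof (rule finite_subset)
  show "factorizations w \<subseteq> {ks. set ks \<subseteq> {..length w} \<and> length ks \<le> length w}"
  proof safe
    fix ks assume ks: "ks \<in> factorizations w"
    then have bound: "ks ! i * fib (i + 2) \<le> length w" if "i < length ks" for i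
      using that nth_mult_fib_le_length_fact_word by (auto simp: factorizations_def)
    have "ks ! i \<le> ks ! i * fib (i + 2)" for i
      using fib_neq_0_nat[of "i + 2"] by (cases "fib (i + 2)") simp_all
    with bound show "x \<le> length w" if "x \<in> set ks" for x
      using that by (metis in_set_conv_nth le_trans)
    show "length ks \<le> length w"
    proof (cases "ks = []")
      case False
      let ?i = "length ks - 1"
      have "ks ! ?i \<noteq> 0"
        using ks False by (simp add: factorizations_def last_conv_nth)
      then have "fib (?i + 2) \<le> ks ! ?i * fib (?i + 2)"
        by simp
      also have "\<dots> \<le> length w"
        using False by (intro bound) simp
      finally have "fib (Suc (length ks)) \<le> length w"
        using False by (simp add: Suc_diff_Suc)
      then show ?thesis
        using le_fib_Suc[of "length ks"] by simp
    qed simp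
  qed
  show "finite {ks. set ks \<subseteq> {..length w} \<and> length ks \<le> length w}"
    by (rule finite_lists_length_le) simp
qed

lemma card_factorizations_le_fib_morph:
  "card (factorizations w) \<le> card (factorizations (fib_morph w))"
proof (rule card_inj_on_le)
  let ?g = "\<lambda>ks :: nat list. if ks = [] then [] else 0 # ks"
  show "inj_on ?g (factorizations w)"
    by (auto simp: inj_on_def)
  show "?g ` factorizations w \<subseteq> factorizations (fib_morph w)"
    by (auto simp: factorizations_def fact_word_Cons)
qed (rule finite_factorizations)

lemma factorizations_fib_morph:
  assumes "w \<noteq> []" and "last w = La"
  shows "factorizations (fib_morph w) = Cons 0 ` factorizations w"
proof safe
  fix ks assume ks: "ks \<in> factorizations (fib_morph w)"
  moreover have "fib_morph w \<noteq> []"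
    using assms(1) by simp
  ultimately obtain e ks' where ks_eq: "ks = e # ks'"
    by (cases ks) (auto simp: factorizations_def)
  have morph_eq: "fib_morph (fact_word ks') @ replicate e La = fib_morph w"
    using ks by (simp add: ks_eq factorizations_def fact_word_Cons)
  have "last (fib_morph w) = Lb"
    using assms by (simp add: last_fib_morph)
  with morph_eq have "e = 0"
    by (metis last_replicate last_appendR letter.distinct(1) replicate_empty)
  with morph_eq have "fact_word ks' = w"
    using inj_fib_morph by (simp add: inj_eq)
  moreover from this have "ks' \<noteq> []"
    using assms(1) by auto
  ultimately have "ks' \<in> factorizations w"
    using ks ks_eq by (simp add: factorizations_def)
  with ks_eq \<open>e = 0\<close> show "ks \<in> Cons 0 ` factorizations w"
    by simp
next
  fix ks assume "ks \<in> factorizations w"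
  with assms(1) show "0 # ks \<in> factorizations (fib_morph w)"
    by (auto simp: factorizations_def fact_word_Cons)
qed

lemma last_fact_word_replicate_even:
  "fact_word (replicate (2 * k) 0 @ 1 # ks) \<noteq> [] \<and> last (fact_word (replicate (2 * k) 0 @ 1 # ks)) = La"
proof (induction k)
  case (Suc k)
  have "replicate (2 * Suc k) 0 @ 1 # ks = 0 # 0 # (replicate (2 * k) 0 @ 1 # ks)"
    by simp
  with Suc show ?case
    by (simp add: fact_word_Cons last_fib_morph)
qed (simp add: fact_word_Cons)

lemma V_fibval_snoc_0_ge:
  "set r \<subseteq> {0, 1} \<Longrightarrow> V (fibval (r @ [0])) \<ge> V (fibval r)"
  by (simp add: V_fibval fact_word_Cons card_factorizations_le_fib_morph)

lemma V_fibval_snoc_0_eq: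
  assumes "set r \<subseteq> {0, 1}" and "fact_word (rev r) \<noteq> []" and "last (fact_word (rev r)) = La"
  shows "V (fibval (r @ [0])) = V (fibval r)"
  using assms by (simp add: V_fibval fact_word_Cons factorizations_fib_morph card_image)

theorem proposition2:
  shows "(\<forall>r::nat list. set r \<subseteq> {0, 1} \<longrightarrow> V (fibval (r @ [0])) \<ge> V (fibval r))
    \<and> (\<forall>(k::nat) (r'::nat list). set r' \<subseteq> {0, 1} \<longrightarrow>
          V (fibval (r' @ [1] @ replicate (2 * k + 1) 0)) = V (fibval (r' @ [1] @ replicate (2 * k) 0)))"
proof (intro conjI allI impI)
  fix k :: nat and r' :: "nat list"
  assume "set r' \<subseteq> {0, 1}"
  moreover define r where "r = r' @ [1] @ replicate (2 * k) 0"
  ultimately have "set r \<subseteq> {0, 1}"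
    by auto
  moreover have "rev r = replicate (2 * k) 0 @ 1 # rev r'"
    by (simp add: r_def)
  ultimately have "V (fibval (r @ [0])) = V (fibval r)"
    using last_fact_word_replicate_even by (intro V_fibval_snoc_0_eq) simp_all
  then show "V (fibval (r' @ [1] @ replicate (2 * k + 1) 0)) = V (fibval (r' @ [1] @ replicate (2 * k) 0))"
    by (simp add: r_def replicate_append_same [symmetric])
qed (rule V_fibval_snoc_0_ge)

end
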